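(* Let $X=(X_1,\ldots,X_n)$ be i.i.d. real random variables whose common distribution has a density $f$ with respect to Lebesgue measure and a unique median $m$, with constants $r,L>0$ such that $f(u)\ge L$ for all $u\in[m-r,m+r]$. Assume $|m|\le R$ for some $R>0$ and let $T>R+r$. Let $\alpha_3\in[2e^{-nL^2r^2/2},1]$. Then with probability at least $1-\alpha_3$, $$|\hat m_T(X)-m|\le\sqrt{\frac{2\log(2/\alpha_3)}{nL^2}}.$$
   Context: For $x\in\mathbb R^n$, $x_{(1)}\le\cdots\le x_{(n)}$ denote its ordered coordinates, $\ell=\lfloor n/2\rfloor$, and $\hat m(x)=x_{(\ell)}$. For $T>0$, $f_T(u)=u$ if $|u|\le T$ and $f_T(u)=\mathrm{sign}(u)T$ otherwise; $\hat m_T(x)=\hat m(y)$ where $y_i=f_T(x_i)$, $i=1,\ldots,n$. *)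

theory Defs
  imports "HOL-Probability.Probability"
begin

definition order_stat :: "nat \<Rightarrow> (nat \<Rightarrow> real) \<Rightarrow> nat \<Rightarrow> real" where
  "order_stat n x k = sort (map x [0..<n]) ! (k - 1)"

definition emp_median :: "nat \<Rightarrow> (nat \<Rightarrow> real) \<Rightarrow> real" where
  "emp_median n x = order_stat n x (n div 2)"

definition clip :: "real \<Rightarrow> real \<Rightarrow> real" where
  "clip T u = (if \<bar>u\<bar> \<le> T then u else sgn u * T)"

definition trunc_median :: "real \<Rightarrow> nat \<Rightarrow> (nat \<Rightarrow> real) \<Rightarrow> real" where
  "trunc_median T n x = emp_median n (\<lambda>i. clip T (x i))"

definition is_median :: "real measure \<Rightarrow> real \<Rightarrow> bool" where
  "is_median mu m \<longleftrightarrow> measure mu {..m} \<ge> 1/2 \<and> measure mu {m..} \<ge> 1/2"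

end

theory Submission
  imports Defs
begin

text \<open>The truncated median lies within \<open>\<epsilon>\<close> of \<open>m\<close> exactly when at least \<open>\<lfloor>n/2\<rfloor>\<close> samples are
  \<open>\<le> m + \<epsilon>\<close> and fewer than \<open>\<lfloor>n/2\<rfloor>\<close> are \<open>< m - \<epsilon>\<close>; as \<open>\<bar>m\<bar> + \<epsilon> < T\<close>, clipping does not
  change these counts. The density bound next to the median makes the expected counts at least
  \<open>n (1/2 + L\<epsilon>)\<close> and at most \<open>n (1/2 - L\<epsilon>)\<close>, so by Hoeffding's inequality each count misses its
  threshold with probability at most \<open>exp (- n L\<^sup>2 \<epsilon>\<^sup>2 / 2) = \<alpha>/2\<close>. The lower bound on \<open>\<alpha>\<close> gives
  \<open>\<epsilon> \<le> r\<close>, and together with \<open>L r \<le> 1/2\<close> (forced by the density bound) also \<open>n \<ge> 2\<close> and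
  \<open>n L \<epsilon> \<ge> 1\<close>, which absorbs the rounding in \<open>\<lfloor>n/2\<rfloor>\<close>.\<close>

lemma sorted_nth_iff_less_length_filter:
  fixes s :: "'a::linorder list"
  assumes sorted: "sorted s" and k: "k < length s"
    and down: "\<And>x y. P x \<Longrightarrow> y \<le> x \<Longrightarrow> P y"
  shows "P (s ! k) \<longleftrightarrow> k < length (filter P s)"
proof -
  let ?j = "length (takeWhile P s)"
  have stop: "\<not> P (s ! i)" if "?j \<le> i" "i < length s" for i
    using nth_length_takeWhile[of P s] sorted_nth_mono[OF sorted that] down that by force
  have "takeWhile P s = filter P s"
  proof (rule takeWhile_eq_filter)
    fix x assume "x \<in> set (dropWhile P s)"
    then obtain i where "x = s ! (?j + i)" "?j + i < length s"
      by (auto simp: dropWhile_eq_drop in_set_conv_nth)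
    then show "\<not> P x" using stop by simp
  qed
  moreover have "P (s ! k) \<longleftrightarrow> k < ?j"
    using stop k takeWhile_nth[of k P s] nth_mem[of k "takeWhile P s"]
    by (metis not_le set_takeWhileD)
  ultimately show ?thesis by simp
qed

lemma order_stat_down_closed_iff:
  assumes "1 \<le> k" "k \<le> n" and down: "\<And>x y. P x \<Longrightarrow> y \<le> x \<Longrightarrow> P y"
  shows "P (order_stat n y k) \<longleftrightarrow> k \<le> card {i. i < n \<and> P (y i)}"
proof -
  have "P (order_stat n y k) \<longleftrightarrow> k - 1 < length (filter P (sort (map y [0..<n])))"
    unfolding order_stat_def
    by (rule sorted_nth_iff_less_length_filter) (use assms in auto)
  also have "length (filter P (sort (map y [0..<n]))) = card {i. i < n \<and> P (y i)}"
    by (auto simp: filter_sort length_filter_conv_card intro!: arg_cong[where f = card])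
  finally show ?thesis using assms(1) by linarith
qed

lemma clip_le_iff: "\<bar>c\<bar> < T \<Longrightarrow> clip T x \<le> c \<longleftrightarrow> x \<le> c"
  by (auto simp: clip_def sgn_if abs_if split: if_splits)

lemma clip_less_iff: "\<bar>c\<bar> < T \<Longrightarrow> clip T x < c \<longleftrightarrow> x < c"
  by (auto simp: clip_def sgn_if abs_if split: if_splits)

lemma trunc_median_le_iff:
  assumes "2 \<le> n" "\<bar>c\<bar> < T"
  shows "trunc_median T n x \<le> c \<longleftrightarrow> n div 2 \<le> card {i. i < n \<and> x i \<le> c}"
  using order_stat_down_closed_iff[of "n div 2" n "\<lambda>u. u \<le> c" "\<lambda>i. clip T (x i)"] assms
  by (simp add: trunc_median_def emp_median_def clip_le_iff)

lemma trunc_median_less_iff: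
  assumes "2 \<le> n" "\<bar>c\<bar> < T"
  shows "trunc_median T n x < c \<longleftrightarrow> n div 2 \<le> card {i. i < n \<and> x i < c}"
  using order_stat_down_closed_iff[of "n div 2" n "\<lambda>u. u < c" "\<lambda>i. clip T (x i)"] assms
  by (simp add: trunc_median_def emp_median_def clip_less_iff)

lemma trunc_median_close_iff:
  assumes "2 \<le> n" "0 \<le> \<epsilon>" "\<bar>m\<bar> + \<epsilon> < T"
  shows "\<bar>trunc_median T n x - m\<bar> \<le> \<epsilon> \<longleftrightarrow>
    n div 2 \<le> card {i. i < n \<and> x i \<le> m + \<epsilon>} \<and> card {i. i < n \<and> x i < m - \<epsilon>} < n div 2"
proof -
  have "\<bar>m + \<epsilon>\<bar> < T" "\<bar>m - \<epsilon>\<bar> < T" using assms(2,3) by linarith+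
  then show ?thesis
    using trunc_median_le_iff[OF \<open>2 \<le> n\<close>, of "m + \<epsilon>" T x]
      trunc_median_less_iff[OF \<open>2 \<le> n\<close>, of "m - \<epsilon>" T x]
    by auto
qed

lemma (in prob_space) prob_vimage_ge_density_bound:
  fixes X :: "'a \<Rightarrow> real"
  assumes D: "distributed M lborel X (\<lambda>u. ennreal (f u))"
    and A: "A \<in> sets borel" "emeasure lborel A < \<infinity>"
    and fL: "\<And>u. u \<in> A \<Longrightarrow> L \<le> f u" and "0 \<le> L"
  shows "L * measure lborel A \<le> prob (X -` A \<inter> space M)"
proof -
  have "ennreal L * emeasure lborel A = (\<integral>\<^sup>+u. ennreal L * indicator A u \<partial>lborel)"
    using A by (simp add: nn_integral_cmult_indicator)
  also have "\<dots> \<le> (\<integral>\<^sup>+u. ennreal (f u) * indicator A u \<partial>lborel)"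
    by (intro nn_integral_mono) (auto simp: fL indicator_def intro!: ennreal_leI)
  also have "\<dots> = emeasure (density lborel (\<lambda>u. ennreal (f u))) A"
    using A distributed_borel_measurable[OF D] by (simp add: emeasure_density)
  also have "\<dots> = emeasure (distr M lborel X) A"
    using distributed_distr_eq_density[OF D] by simp
  also have "\<dots> = emeasure M (X -` A \<inter> space M)"
    using A distributed_measurable[OF D] by (simp add: emeasure_distr)
  finally show ?thesis
    using A \<open>0 \<le> L\<close>
    by (simp add: emeasure_eq_measure emeasure_eq_ennreal_measure ennreal_le_iff flip: ennreal_mult)
qed

lemma (in prob_space) prob_le_median_plus_ge:
  fixes X :: "'a \<Rightarrow> real"
  assumes D: "distributed M lborel X (\<lambda>u. ennreal (f u))"
    and med: "is_median (distr M borel X) m"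
    and fL: "\<And>u. u \<in> {m..m + e} \<Longrightarrow> L \<le> f u" and "0 \<le> L" "0 \<le> e"
  shows "1/2 + L * e \<le> prob {\<omega>\<in>space M. X \<omega> \<le> m + e}"
proof -
  have Xm: "X \<in> borel_measurable M" using distributed_measurable[OF D] by simp
  have "1/2 \<le> prob (X -` {..m} \<inter> space M)"
    using med Xm by (simp add: is_median_def measure_distr)
  moreover have "L * e \<le> prob (X -` {m<..m + e} \<inter> space M)"
    using prob_vimage_ge_density_bound[OF D, of "{m<..m + e}" L] fL assms(4,5) by auto
  moreover have "prob {\<omega>\<in>space M. X \<omega> \<le> m + e}
      = prob (X -` {..m} \<inter> space M) + prob (X -` {m<..m + e} \<inter> space M)"
    using Xm \<open>0 \<le> e\<close> by (subst finite_measure_Union[symmetric]) (auto intro!: arg_cong[where f = prob])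
  ultimately show ?thesis by simp
qed

lemma (in prob_space) prob_less_median_minus_le:
  fixes X :: "'a \<Rightarrow> real"
  assumes D: "distributed M lborel X (\<lambda>u. ennreal (f u))"
    and med: "is_median (distr M borel X) m"
    and fL: "\<And>u. u \<in> {m - e..m} \<Longrightarrow> L \<le> f u" and "0 \<le> L" "0 \<le> e"
  shows "prob {\<omega>\<in>space M. X \<omega> < m - e} \<le> 1/2 - L * e"
proof -
  have Xm: "X \<in> borel_measurable M" using distributed_measurable[OF D] by simp
  have "1/2 \<le> prob (X -` {m..} \<inter> space M)"
    using med Xm by (simp add: is_median_def measure_distr)
  moreover have "L * e \<le> prob (X -` {m - e..<m} \<inter> space M)"
    using prob_vimage_ge_density_bound[OF D, of "{m - e..<m}" L] fL assms(4,5) by auto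
  moreover have "prob {\<omega>\<in>space M. X \<omega> < m - e}
      = 1 - prob ((X -` {m..} \<inter> space M) \<union> (X -` {m - e..<m} \<inter> space M))"
    using Xm \<open>0 \<le> e\<close> by (subst prob_compl[symmetric]) (auto intro!: arg_cong[where f = prob])
  moreover have "prob ((X -` {m..} \<inter> space M) \<union> (X -` {m - e..<m} \<inter> space M))
      = prob (X -` {m..} \<inter> space M) + prob (X -` {m - e..<m} \<inter> space M)"
    using Xm by (intro finite_measure_Union) auto
  ultimately show ?thesis by simp
qed

lemma real_card_eq_sum_indicator:
  "finite I \<Longrightarrow> real (card {i\<in>I. X i \<in> A}) = (\<Sum>i\<in>I. indicator A (X i))"
  by (simp add: indicator_def Collect_conj_eq Int_commute)

lemma borel_measurable_count:
  assumes "finite I" "A \<in> sets borel" "\<And>i. i \<in> I \<Longrightarrow> X i \<in> borel_measurable M"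
  shows "(\<lambda>\<omega>. real (card {i\<in>I. X i \<omega> \<in> A})) \<in> borel_measurable M"
  using assms by (simp add: real_card_eq_sum_indicator)

lemma (in prob_space)
  fixes X :: "'i \<Rightarrow> 'a \<Rightarrow> real"
  assumes indep: "indep_vars (\<lambda>_. borel) X I" and I: "finite I" "I \<noteq> {}"
    and A: "A \<in> sets borel" and "0 \<le> t"
  defines "\<mu> \<equiv> (\<Sum>i\<in>I. prob {\<omega>\<in>space M. X i \<omega> \<in> A})"
  shows count_Hoeffding_le:
      "prob {\<omega>\<in>space M. real (card {i\<in>I. X i \<omega> \<in> A}) \<le> \<mu> - t} \<le> exp (-2 * t\<^sup>2 / card I)"
    and count_Hoeffding_ge:
      "prob {\<omega>\<in>space M. \<mu> + t \<le> real (card {i\<in>I. X i \<omega> \<in> A})} \<le> exp (-2 * t\<^sup>2 / card I)"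
proof -
  have E: "expectation (\<lambda>\<omega>. indicator A (X i \<omega>) :: real) = prob {\<omega>\<in>space M. X i \<omega> \<in> A}"
    for i
  proof -
    have "expectation (\<lambda>\<omega>. indicator A (X i \<omega>) :: real)
        = expectation (indicator {\<omega>\<in>space M. X i \<omega> \<in> A})"
      by (intro Bochner_Integration.integral_cong) (auto simp: indicator_def)
    then show ?thesis by (simp add: Int_absorb2 Collect_subset)
  qed
  interpret Hoeffding_ineq M I "\<lambda>i \<omega>. indicator A (X i \<omega>)" "\<lambda>_. 0" "\<lambda>_. 1" \<mu>
  proof unfold_locales
    show "indep_vars (\<lambda>_. borel) (\<lambda>i \<omega>. indicator A (X i \<omega>)) I"
      by (rule indep_vars_compose2[OF indep]) (use A in auto)
  qed (auto simp: \<mu>_def E I)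
  have "(\<Sum>i\<in>I. (1 - 0 :: real)\<^sup>2) = card I" by simp
  then show
      "prob {\<omega>\<in>space M. real (card {i\<in>I. X i \<omega> \<in> A}) \<le> \<mu> - t} \<le> exp (-2 * t\<^sup>2 / card I)"
      "prob {\<omega>\<in>space M. \<mu> + t \<le> real (card {i\<in>I. X i \<omega> \<in> A})} \<le> exp (-2 * t\<^sup>2 / card I)"
    using Hoeffding_ineq_le[OF \<open>0 \<le> t\<close>] Hoeffding_ineq_ge[OF \<open>0 \<le> t\<close>] I
    by (simp_all add: real_card_eq_sum_indicator card_gt_0_iff)
qed

lemma real_div_2_bounds: "(real n - 1) / 2 \<le> real (n div 2)" "real (n div 2) \<le> real n / 2"
proof -
  have "2 * (n div 2) \<le> n" "n \<le> 2 * (n div 2) + 1" by presburger+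
  then show "(real n - 1) / 2 \<le> real (n div 2)" "real (n div 2) \<le> real n / 2"
    by (simp_all add: field_simps flip: of_nat_le_iff)
qed

lemma (in prob_space) prob_ge_1_minus_bad_events:
  assumes "S \<in> events" "B1 \<in> events" "B2 \<in> events" "space M - (B1 \<union> B2) \<subseteq> S"
  shows "1 - (prob B1 + prob B2) \<le> prob S"
proof -
  have "prob (space M - (B1 \<union> B2)) \<le> prob S"
    using assms by (intro finite_measure_mono)
  moreover have "prob (space M - (B1 \<union> B2)) = 1 - prob (B1 \<union> B2)"
    using assms by (intro prob_compl) auto
  moreover have "prob (B1 \<union> B2) \<le> prob B1 + prob B2"
    using assms by (intro measure_Un_le) auto
  ultimately show ?thesis by linarith
qed

lemma (in prob_space) prob_trunc_median_close:
  fixes X :: "nat \<Rightarrow> 'a \<Rightarrow> real"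
  assumes indep: "indep_vars (\<lambda>_. borel) X {0..<n}" and "2 \<le> n"
    and "0 \<le> \<epsilon>" "\<bar>m\<bar> + \<epsilon> < T"
    and ge: "\<And>i. i < n \<Longrightarrow> 1/2 + \<delta> \<le> prob {\<omega>\<in>space M. X i \<omega> \<le> m + \<epsilon>}"
    and le: "\<And>i. i < n \<Longrightarrow> prob {\<omega>\<in>space M. X i \<omega> < m - \<epsilon>} \<le> 1/2 - \<delta>"
    and "1 \<le> n * \<delta>"
  shows "1 - 2 * exp (- real n * \<delta>\<^sup>2 / 2)
    \<le> prob {\<omega>\<in>space M. \<bar>trunc_median T n (\<lambda>i. X i \<omega>) - m\<bar> \<le> \<epsilon>}"
proof -
  define t where "t = n * \<delta> / 2"
  define below where "below = (\<lambda>\<omega>. real (card {i\<in>{0..<n}. X i \<omega> \<in> {..m + \<epsilon>}}))"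
  define strictly_below where
    "strictly_below = (\<lambda>\<omega>. real (card {i\<in>{0..<n}. X i \<omega> \<in> {..<m - \<epsilon>}}))"
  define \<mu>1 where "\<mu>1 = (\<Sum>i\<in>{0..<n}. prob {\<omega>\<in>space M. X i \<omega> \<in> {..m + \<epsilon>}})"
  define \<mu>2 where "\<mu>2 = (\<Sum>i\<in>{0..<n}. prob {\<omega>\<in>space M. X i \<omega> \<in> {..<m - \<epsilon>}})"
  define B1 where "B1 = {\<omega>\<in>space M. below \<omega> \<le> \<mu>1 - t}"
  define B2 where "B2 = {\<omega>\<in>space M. \<mu>2 + t \<le> strictly_below \<omega>}"
  define S where "S = {\<omega>\<in>space M. \<bar>trunc_median T n (\<lambda>i. X i \<omega>) - m\<bar> \<le> \<epsilon>}"
  have S_eq: "S = {\<omega>\<in>space M. n div 2 \<le> below \<omega> \<and> strictly_below \<omega> < n div 2}"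
    unfolding S_def below_def strictly_below_def
    using trunc_median_close_iff[OF assms(2-4)] by simp
  have "X i \<in> borel_measurable M" if "i \<in> {0..<n}" for i
    using indep that unfolding indep_vars_def by blast
  then have "below \<in> borel_measurable M" "strictly_below \<in> borel_measurable M"
    unfolding below_def strictly_below_def by (auto intro!: borel_measurable_count)
  then have events: "B1 \<in> events" "B2 \<in> events" "S \<in> events"
    unfolding B1_def B2_def S_eq by measurable
  have exponent: "2 * t\<^sup>2 / real n = n * \<delta>\<^sup>2 / 2"
    using \<open>2 \<le> n\<close> by (simp add: t_def power2_eq_square)
  have "0 \<le> t" "{0..<n} \<noteq> {}" using \<open>1 \<le> n * \<delta>\<close> \<open>2 \<le> n\<close> by (auto simp: t_def)
  then have "prob B1 \<le> exp (- real n * \<delta>\<^sup>2 / 2)" "prob B2 \<le> exp (- real n * \<delta>\<^sup>2 / 2)"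
    using count_Hoeffding_le[OF indep, of "{..m + \<epsilon>}" t] count_Hoeffding_ge[OF indep, of "{..<m - \<epsilon>}" t]
    by (simp_all add: exponent B1_def B2_def below_def strictly_below_def \<mu>1_def \<mu>2_def)
  have "n * (1/2 + \<delta>) \<le> \<mu>1"
    unfolding \<mu>1_def using sum_mono[of "{0..<n}" "\<lambda>_. 1/2 + \<delta>"] ge by simp
  moreover have "\<mu>2 \<le> n * (1/2 - \<delta>)"
    unfolding \<mu>2_def using sum_mono[of "{0..<n}" _ "\<lambda>_. 1/2 - \<delta>"] le by simp
  ultimately have "n div 2 \<le> \<mu>1 - t" "\<mu>2 + t \<le> n div 2"
    using \<open>1 \<le> n * \<delta>\<close> real_div_2_bounds[of n] unfolding t_def by (simp_all add: algebra_simps)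
  then have "space M - (B1 \<union> B2) \<subseteq> S"
    unfolding S_eq B1_def B2_def by auto
  from prob_ge_1_minus_bad_events[OF events(3,1,2) this] show ?thesis
    using \<open>prob B1 \<le> _\<close> \<open>prob B2 \<le> _\<close> unfolding S_def by linarith
qed

lemma confidence_radius:
  fixes n :: nat and L r \<alpha> :: real
  assumes "0 < L" "0 < r" "L * r \<le> 1/2"
    and \<alpha>: "2 * exp (- (real n * L\<^sup>2 * r\<^sup>2 / 2)) \<le> \<alpha>" "\<alpha> \<le> 1"
  defines "\<epsilon> \<equiv> sqrt (2 * ln (2 / \<alpha>) / (real n * L\<^sup>2))"
  shows "2 \<le> n" "0 < \<epsilon>" "\<epsilon> \<le> r" "1 \<le> n * (L * \<epsilon>)"
    and "2 * exp (- real n * (L * \<epsilon>)\<^sup>2 / 2) = \<alpha>"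
proof -
  have "0 < \<alpha>"
    using \<alpha>(1) exp_gt_zero[of "- (real n * L\<^sup>2 * r\<^sup>2 / 2)"] by linarith
  have "2 \<le> 2 / \<alpha>" using \<open>0 < \<alpha>\<close> \<alpha>(2) by (simp add: field_simps)
  then have ln_ge: "2/3 \<le> ln (2 / \<alpha>)"
    using ln_mono[of 2 "2 / \<alpha>"] ln2_ge_two_thirds by simp
  have "2 / \<alpha> \<le> exp (real n * L\<^sup>2 * r\<^sup>2 / 2)"
    using \<alpha>(1) \<open>0 < \<alpha>\<close> by (simp add: exp_minus field_simps)
  from ln_mono[OF this] have "ln (2 / \<alpha>) \<le> real n * L\<^sup>2 * r\<^sup>2 / 2"
    using \<open>0 < \<alpha>\<close> by simp
  then have ln_le: "2 * ln (2 / \<alpha>) \<le> real n * L\<^sup>2 * r\<^sup>2" by simp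
  have "(L * r)\<^sup>2 \<le> (1/2)\<^sup>2"
    using assms(1-3) by (intro power_mono) auto
  then have "real n * L\<^sup>2 * r\<^sup>2 \<le> real n / 4"
    using mult_left_mono[of "(L * r)\<^sup>2" "(1/2)\<^sup>2" "real n"]
    by (simp add: power_mult_distrib mult.assoc power_divide)
  then show "2 \<le> n" using ln_ge ln_le by linarith
  then have radius: "real n * (L * \<epsilon>)\<^sup>2 = 2 * ln (2 / \<alpha>)"
    using ln_ge \<open>0 < L\<close> by (simp add: \<epsilon>_def power_mult_distrib)
  show "0 < \<epsilon>"
    using ln_ge \<open>0 < L\<close> \<open>2 \<le> n\<close> by (simp add: \<epsilon>_def)
  have "2 * ln (2 / \<alpha>) / (real n * L\<^sup>2) \<le> r\<^sup>2"
    using ln_le \<open>0 < L\<close> \<open>2 \<le> n\<close> by (simp add: divide_le_eq mult.commute mult.left_commute)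
  from real_sqrt_le_mono[OF this] show "\<epsilon> \<le> r"
    using \<open>0 < r\<close> by (simp add: \<epsilon>_def)
  have "(n * (L * \<epsilon>))\<^sup>2 = real n * (real n * (L * \<epsilon>)\<^sup>2)"
    by (simp add: power2_eq_square)
  also have "\<dots> = real n * (2 * ln (2 / \<alpha>))"
    using radius by simp
  also have "\<dots> \<ge> 2 * (4/3)"
    using mult_mono[of 2 "real n" "4/3" "2 * ln (2 / \<alpha>)"] ln_ge \<open>2 \<le> n\<close> by simp
  finally have "1\<^sup>2 \<le> (n * (L * \<epsilon>))\<^sup>2" by simp
  then show "1 \<le> n * (L * \<epsilon>)"
    by (rule power2_le_imp_le) (use \<open>0 < \<epsilon>\<close> \<open>0 < L\<close> in simp)
  have "- real n * (L * \<epsilon>)\<^sup>2 / 2 = - ln (2 / \<alpha>)"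
    using radius by simp
  then show "2 * exp (- real n * (L * \<epsilon>)\<^sup>2 / 2) = \<alpha>"
    using \<open>0 < \<alpha>\<close> by (simp add: exp_minus)
qed

theorem lemma3:
  fixes M :: "'a measure" and X :: "nat \<Rightarrow> 'a \<Rightarrow> real" and n :: nat
    and f :: "real \<Rightarrow> real" and m r L R T \<alpha>3 :: real
  assumes "prob_space M"
    and indep: "prob_space.indep_vars M (\<lambda>_. borel) X {0..<n}"
    and dens: "\<And>i. i < n \<Longrightarrow> distributed M lborel (X i) (\<lambda>u. ennreal (f u))"
    and med: "\<forall>i<n. is_median (distr M borel (X i)) m"
    and med_unique: "\<forall>i<n. \<forall>m'. is_median (distr M borel (X i)) m' \<longrightarrow> m' = m"
    and "r > 0" and "L > 0"
    and fL: "\<And>u. u \<in> {m - r..m + r} \<Longrightarrow> f u \<ge> L"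
    and "R > 0" and "\<bar>m\<bar> \<le> R" and "T > R + r"
    and "\<alpha>3 \<in> {2 * exp (- (real n * L^2 * r^2 / 2))..1}"
  shows "prob_space.prob M {\<omega> \<in> space M.
           \<bar>trunc_median T n (\<lambda>i. X i \<omega>) - m\<bar> \<le> sqrt (2 * ln (2 / \<alpha>3) / (real n * L^2))}
         \<ge> 1 - \<alpha>3"
proof -
  interpret prob_space M by fact
  have \<alpha>: "2 * exp (- (real n * L\<^sup>2 * r\<^sup>2 / 2)) \<le> \<alpha>3" "\<alpha>3 \<le> 1" using assms(12) by auto
  then have "n \<noteq> 0" by (cases n) auto
  have "1/2 + L * r \<le> prob {\<omega>\<in>space M. X 0 \<omega> \<le> m + r}"
    using \<open>n \<noteq> 0\<close> med \<open>r > 0\<close> \<open>L > 0\<close> fL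
    by (intro prob_le_median_plus_ge[OF dens]) auto
  then have "L * r \<le> 1/2" using prob_le_1[of "{\<omega>\<in>space M. X 0 \<omega> \<le> m + r}"] by linarith
  define \<epsilon> where "\<epsilon> = sqrt (2 * ln (2 / \<alpha>3) / (real n * L\<^sup>2))"
  note radius = confidence_radius[OF \<open>L > 0\<close> \<open>r > 0\<close> \<open>L * r \<le> 1/2\<close> \<alpha>, folded \<epsilon>_def]
  have "1 - 2 * exp (- real n * (L * \<epsilon>)\<^sup>2 / 2)
      \<le> prob {\<omega>\<in>space M. \<bar>trunc_median T n (\<lambda>i. X i \<omega>) - m\<bar> \<le> \<epsilon>}"
  proof (rule prob_trunc_median_close[OF indep radius(1)])
    show "\<bar>m\<bar> + \<epsilon> < T" using radius(3) assms(10,11) by linarith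
    show "1/2 + L * \<epsilon> \<le> prob {\<omega>\<in>space M. X i \<omega> \<le> m + \<epsilon>}" if "i < n" for i
      using that med radius(2,3) \<open>L > 0\<close> fL
      by (intro prob_le_median_plus_ge[OF dens]) auto
    show "prob {\<omega>\<in>space M. X i \<omega> < m - \<epsilon>} \<le> 1/2 - L * \<epsilon>" if "i < n" for i
      using that med radius(2,3) \<open>L > 0\<close> fL
      by (intro prob_less_median_minus_le[OF dens]) auto
  qed (use radius in auto)
  then show ?thesis using radius(5) by (simp add: \<epsilon>_def)
qed

end
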